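(* For every integer $j\ge0$, the graph $K_{j+2}\cup K^*_{j+1}$ on $n=2j+3$ vertices satisfies $\lambda_2-\lambda_{n-j}=j+2$, and hence \[s_{1,j}\ge\frac{j+2}{2j+3}.\]
   Context: $K_{j+2}\cup K^*_{j+1}$ denotes the disjoint union of the complete graph $K_{j+2}$ (no loops) and the complete graph $K_{j+1}$ with a loop at each of its $j+1$ vertices. Graphs with loops are identified with their symmetric $(0,1)$ adjacency matrices (diagonal entry $1$ iff loop), eigenvalues listed $\lambda_1\ge\cdots\ge\lambda_n$. For a simple graph $G$ on $n$ vertices, ${\rm spread}_{i,j}(G)=\lambda_{i+1}(G)-\lambda_{n-j}(G)$; ${\rm spread}_{i,j}(n)$ is its maximum over simple graphs on $n$ vertices and $s_{i,j}=\lim_{n\to\infty}{\rm spread}_{i,j}(n)/n$ (known to exist, and known to equal the analogous limit taken over graphs with at most one loop per vertex). *)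

theory Defs
  imports Complex_Main "Jordan_Normal_Form.Char_Poly"
begin

text \<open>For a real symmetric matrix all n roots are real.\<close>
definition eigs_desc :: "real mat \<Rightarrow> real list" where
  "eigs_desc A = rev (sorted_list_of_multiset (proots (char_poly A)))"

definition eig :: "real mat \<Rightarrow> nat \<Rightarrow> real" where
  "eig A k = eigs_desc A ! (k - 1)"

definition simple_adj :: "nat \<Rightarrow> real mat \<Rightarrow> bool" where
  "simple_adj n A \<longleftrightarrow> A \<in> carrier_mat n n \<and>
     (\<forall>a<n. \<forall>b<n. (A $$ (a,b) = 0 \<or> A $$ (a,b) = 1) \<and> A $$ (a,b) = A $$ (b,a)) \<and>
     (\<forall>a<n. A $$ (a,a) = 0)"

definition spread_g :: "nat \<Rightarrow> nat \<Rightarrow> real mat \<Rightarrow> real" where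
  "spread_g i j A = eig A (i + 1) - eig A (dim_row A - j)"

definition spread_n :: "nat \<Rightarrow> nat \<Rightarrow> nat \<Rightarrow> real" where
  "spread_n i j n = Max {spread_g i j A | A. simple_adj n A}"

definition s_lim :: "nat \<Rightarrow> nat \<Rightarrow> real" where
  "s_lim i j = lim (\<lambda>n. spread_n i j n / real n)"

text \<open>Adjacency matrix of K_{j+2} (vertices 0..j+1, no loops) disjoint union
  K*_{j+1} (vertices j+2..2j+2, complete with a loop at every vertex).\<close>
definition KK_loop :: "nat \<Rightarrow> real mat" where
  "KK_loop j = mat (2*j+3) (2*j+3) (\<lambda>(a,b).
     if (a < j+2 \<and> b < j+2 \<and> a \<noteq> b) \<or> (j+2 \<le> a \<and> j+2 \<le> b) then 1 else 0)"

end

theory Submission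
  imports Defs
begin

text \<open>The spectrum of K_(j+2) \<union> K*_(j+1) is j+1 (twice), 0 (j times) and -1 (j+1 times), so
  \<lambda>_2 - \<lambda>_(n-j) = (j+1) - (-1). For the bound, blow every vertex up into m copies and delete
  the loops: the result is the complete (j+2)-partite graph with parts of size m beside
  K_((j+1)m), a simple graph on (2j+3)m vertices with \<lambda>_2 = (j+1)m - 1 and \<lambda>_(n-j) = -m.
  Hence spread_(1,j)((2j+3)m) \<ge> (j+2)m - 1, and dividing by (2j+3)m and letting m \<rightarrow> \<infinity> gives
  the bound. All characteristic polynomials come from one reduction: when every difference
  e_b - e_(b mod k) (b \<ge> k) is an eigenvector, the characteristic polynomial factors into that of
  the quotient matrix over the residue classes modulo k and the corresponding linear factors.\<close>

text \<open>Column \<open>b \<ge> k\<close> of \<open>fold_mat n k\<close> is \<open>e_(b mod k)\<close>, all other columns vanish; so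
  \<open>1 - fold_mat n k\<close> is the change of basis \<open>e_b \<mapsto> e_b - e_(b mod k)\<close> (\<open>b \<ge> k\<close>).\<close>
definition fold_mat :: "nat \<Rightarrow> nat \<Rightarrow> real mat" where
  "fold_mat n k = mat n n (\<lambda>(a,b). if k \<le> b \<and> a = b mod k then 1 else 0)"

lemma fold_mat_dims [simp]: "dim_row (fold_mat n k) = n" "dim_col (fold_mat n k) = n"
  by (simp_all add: fold_mat_def)

lemma fold_mat_carrier [simp]: "fold_mat n k \<in> carrier_mat n n"
  by (simp add: carrier_matI)

lemma fold_mat_square: assumes "0 < k" shows "fold_mat n k * fold_mat n k = 0\<^sub>m n n"
proof (rule eq_matI)
  fix a b assume "a < dim_row (0\<^sub>m n n)" "b < dim_col (0\<^sub>m n n)"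
  with assms show "(fold_mat n k * fold_mat n k) $$ (a, b) = 0\<^sub>m n n $$ (a, b)"
    by (auto simp: fold_mat_def scalar_prod_def intro!: sum.neutral)
       (metis mod_less_divisor not_le)
qed (auto simp: fold_mat_def)

lemma fold_mat_inverse:
  assumes "0 < k"
  shows "(1\<^sub>m n - fold_mat n k) * (1\<^sub>m n + fold_mat n k) = 1\<^sub>m n"
    and "(1\<^sub>m n + fold_mat n k) * (1\<^sub>m n - fold_mat n k) = 1\<^sub>m n"
proof -
  let ?N = "fold_mat n k"
  note N = fold_mat_carrier[of n k]
  have "(1\<^sub>m n - ?N) * (1\<^sub>m n + ?N) = 1\<^sub>m n * (1\<^sub>m n + ?N) - ?N * (1\<^sub>m n + ?N)"
    using N by (simp add: minus_mult_distrib_mat[OF one_carrier_mat N add_carrier_mat[OF N]])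
  also have "\<dots> = (1\<^sub>m n + ?N) - (?N + ?N * ?N)"
    using N by (simp add: mult_add_distrib_mat[OF N one_carrier_mat N])
  finally show "(1\<^sub>m n - ?N) * (1\<^sub>m n + ?N) = 1\<^sub>m n"
    using fold_mat_square[OF assms] by (auto intro!: eq_matI)
  have "(1\<^sub>m n + ?N) * (1\<^sub>m n - ?N) = 1\<^sub>m n * (1\<^sub>m n - ?N) + ?N * (1\<^sub>m n - ?N)"
    using N by (simp add: add_mult_distrib_mat[OF one_carrier_mat N minus_carrier_mat[OF N]])
  also have "\<dots> = (1\<^sub>m n - ?N) + (?N - ?N * ?N)"
    using N by (simp add: mult_minus_distrib_mat[OF N one_carrier_mat N] minus_carrier_mat)
  finally show "(1\<^sub>m n + ?N) * (1\<^sub>m n - ?N) = 1\<^sub>m n"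
    using fold_mat_square[OF assms] by (auto intro!: eq_matI)
qed

lemma fold_conjugate_eq:
  assumes "A \<in> carrier_mat n n"
  shows "(1\<^sub>m n + fold_mat n k) * A * (1\<^sub>m n - fold_mat n k)
         = A * (1\<^sub>m n - fold_mat n k) + fold_mat n k * (A * (1\<^sub>m n - fold_mat n k))"
proof -
  note N = fold_mat_carrier[of n k]
  have B: "A * (1\<^sub>m n - fold_mat n k) \<in> carrier_mat n n" using assms by (auto intro: minus_carrier_mat)
  show ?thesis
    by (simp add: left_mult_one_mat[OF B] assoc_mult_mat[OF add_carrier_mat[OF N] assms minus_carrier_mat[OF N]]
        add_mult_distrib_mat[OF one_carrier_mat N B])
qed

lemma mult_one_minus_fold_mat_entry:
  assumes A: "A \<in> carrier_mat n n" and k: "0 < k" "k \<le> n" and ab: "a < n" "b < n"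
  shows "(A * (1\<^sub>m n - fold_mat n k)) $$ (a,b) = A $$ (a,b) - (if k \<le> b then A $$ (a, b mod k) else 0)"
proof -
  have "(A * fold_mat n k) $$ (a,b) = (\<Sum>c<n. A $$ (a,c) * (if k \<le> b \<and> c = b mod k then 1 else 0))"
    using A ab by (simp add: fold_mat_def scalar_prod_def lessThan_atLeast0)
  also have "\<dots> = (\<Sum>c<n. if c = b mod k then (if k \<le> b then A $$ (a,c) else 0) else 0)"
    by (rule sum.cong) auto
  also have "\<dots> = (if k \<le> b then A $$ (a, b mod k) else 0)"
    using k ab by (subst sum.delta) (auto intro: order.strict_trans[OF mod_less_divisor])
  moreover have "A * (1\<^sub>m n - fold_mat n k) = A - A * fold_mat n k"
    using A by (simp add: mult_minus_distrib_mat[OF A one_carrier_mat fold_mat_carrier])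
  ultimately show ?thesis
    using A ab by simp
qed

lemma fold_mat_mult_entry:
  assumes "B \<in> carrier_mat n n" and "a < n" "b < n"
  shows "(fold_mat n k * B) $$ (a,b) = (\<Sum>c | c < n \<and> k \<le> c \<and> a = c mod k. B $$ (c,b))"
proof -
  have "(fold_mat n k * B) $$ (a,b) = (\<Sum>c<n. (if k \<le> c \<and> a = c mod k then 1 else 0) * B $$ (c,b))"
    using assms by (simp add: fold_mat_def scalar_prod_def lessThan_atLeast0)
  then show ?thesis
    by (simp add: sum.If_cases[of "{..<n}"] Int_def if_distrib[of "\<lambda>x. x * _"] cong: if_cong)
qed

text \<open>Hypothesis \<open>eigvec\<close> says \<open>A (e_b - e_(b mod k)) = lam (e_b - e_(b mod k))\<close>.\<close>
lemma fold_conjugate_entry_high: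
  fixes A :: "real mat"
  assumes A: "A \<in> carrier_mat n n" and k: "0 < k" "k \<le> n" and ab: "a < n" "b < n" "k \<le> b"
    and eigvec: "\<And>c. c < n \<Longrightarrow> A $$ (c,b) - A $$ (c, b mod k)
       = lam * ((if c = b then 1 else 0) - (if c = b mod k then 1 else 0))"
  shows "((1\<^sub>m n + fold_mat n k) * A * (1\<^sub>m n - fold_mat n k)) $$ (a,b) = (if a = b then lam else 0)"
proof -
  let ?B = "A * (1\<^sub>m n - fold_mat n k)"
  have B: "?B \<in> carrier_mat n n" using A by (auto intro: minus_carrier_mat)
  have B_col: "?B $$ (c,b) = lam * ((if c = b then 1 else 0) - (if c = b mod k then 1 else 0))"
    if "c < n" for c
    using mult_one_minus_fold_mat_entry[OF A k that ab(2)] eigvec[OF that] ab by simp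
  have "(fold_mat n k * ?B) $$ (a,b) = (\<Sum>c | c < n \<and> k \<le> c \<and> a = c mod k. ?B $$ (c,b))"
    by (rule fold_mat_mult_entry[OF B ab(1,2)])
  also have "\<dots> = (\<Sum>c | c < n \<and> k \<le> c \<and> a = c mod k. if c = b then lam else 0)"
  proof (rule sum.cong[OF refl])
    fix c assume c: "c \<in> {c. c < n \<and> k \<le> c \<and> a = c mod k}"
    then have "c \<noteq> b mod k" using k by (metis mem_Collect_eq mod_less_divisor not_le)
    then show "?B $$ (c,b) = (if c = b then lam else 0)" using B_col c by auto
  qed
  also have "\<dots> = (if a = b mod k then lam else 0)"
    using ab by (simp add: sum.delta[of "{c. c < n \<and> k \<le> c \<and> a = c mod k}" b "\<lambda>_. lam"])
  finally have "(fold_mat n k * ?B) $$ (a,b) = (if a = b mod k then lam else 0)" .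
  then show ?thesis
    unfolding fold_conjugate_eq[OF A] using B ab B_col[OF ab(1)] by auto
qed

lemma fold_conjugate_entry_low:
  fixes A :: "real mat"
  assumes A: "A \<in> carrier_mat n n" and k: "0 < k" "k \<le> n" and ab: "a < k" "b < k"
  shows "((1\<^sub>m n + fold_mat n k) * A * (1\<^sub>m n - fold_mat n k)) $$ (a,b)
       = (\<Sum>c | c < n \<and> c mod k = a. A $$ (c,b))"
proof -
  let ?B = "A * (1\<^sub>m n - fold_mat n k)"
  have B: "?B \<in> carrier_mat n n" using A by (auto intro: minus_carrier_mat)
  have ab': "a < n" "b < n" using ab k by auto
  have B_col: "?B $$ (c,b) = A $$ (c,b)" if "c < n" for c
    using mult_one_minus_fold_mat_entry[OF A k that ab'(2)] ab by simp
  have "(fold_mat n k * ?B) $$ (a,b) = (\<Sum>c | c < n \<and> k \<le> c \<and> a = c mod k. A $$ (c,b))"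
    unfolding fold_mat_mult_entry[OF B ab'] by (rule sum.cong) (auto simp: B_col)
  moreover have "{c. c < n \<and> c mod k = a} = insert a {c. c < n \<and> k \<le> c \<and> a = c mod k}"
    using ab ab' by (auto simp: not_le) (metis mod_less not_le)
  ultimately show ?thesis
    unfolding fold_conjugate_eq[OF A] using B ab' B_col[OF ab'(1)] ab by (simp add: sum.insert)
qed

lemma char_poly_four_block_zero_upper_right:
  fixes A1 :: "'a :: idom mat"
  assumes A1: "A1 \<in> carrier_mat n n" and A3: "A3 \<in> carrier_mat m n" and A4: "A4 \<in> carrier_mat m m"
  shows "char_poly (four_block_mat A1 (0\<^sub>m n m) A3 A4) = char_poly A1 * char_poly A4"
proof -
  let ?cm = "\<lambda>A. [:0, 1:] \<cdot>\<^sub>m 1\<^sub>m (dim_row A) + map_mat (\<lambda>a. [:- a:]) A"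
  have "?cm (four_block_mat A1 (0\<^sub>m n m) A3 A4)
      = four_block_mat (?cm A1) (0\<^sub>m n m) (map_mat (\<lambda>a. [:- a:]) A3) (?cm A4)"
    by (rule eq_matI) (use A1 A3 A4 in \<open>auto simp: one_poly_def\<close>)
  moreover have "det \<dots> = det (?cm A1) * det (?cm A4)"
    by (rule det_four_block_mat_upper_right_zero) (use A1 A3 A4 in auto)
  ultimately show ?thesis
    unfolding char_poly_defs using A1 A4 by simp
qed

lemma char_poly_diagonal:
  fixes f :: "nat \<Rightarrow> 'a :: comm_ring_1"
  shows "char_poly (mat m m (\<lambda>(i,j). if i = j then f i else 0)) = (\<Prod>i<m. [:- f i, 1:])"
proof -
  let ?D = "mat m m (\<lambda>(i,j). if i = j then f i else 0)"
  have "char_poly ?D = (\<Prod>a \<leftarrow> diag_mat ?D. [:- a, 1:])"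
    by (rule char_poly_upper_triangular) (auto simp: upper_triangular_def)
  also have "\<dots> = (\<Prod>i \<leftarrow> [0..<m]. [:- f i, 1:])"
    unfolding diag_mat_def by (auto simp: comp_def intro!: arg_cong[where f=prod_list] map_cong)
  finally show ?thesis
    by (simp add: prod.distinct_set_conv_list[symmetric] atLeast0LessThan)
qed

lemma similar_mat_fold_conjugate:
  assumes A: "A \<in> carrier_mat n n" and "0 < k"
  shows "similar_mat A ((1\<^sub>m n + fold_mat n k) * A * (1\<^sub>m n - fold_mat n k))"
proof -
  define P where "P = 1\<^sub>m n - fold_mat n k"
  define Q where "Q = 1\<^sub>m n + fold_mat n k"
  have P: "P \<in> carrier_mat n n" and Q: "Q \<in> carrier_mat n n"
    by (auto simp: P_def Q_def minus_carrier_mat)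
  have PQ: "P * Q = 1\<^sub>m n" and QP: "Q * P = 1\<^sub>m n"
    unfolding P_def Q_def using fold_mat_inverse[OF \<open>0 < k\<close>] by simp_all
  have "P * (Q * A * P) * Q = P * (Q * (A * (P * Q)))"
    using P Q A by (simp add: assoc_mult_mat[of _ n n _ n _ n])
  also have "\<dots> = (P * Q) * A" using P Q A PQ by (simp add: assoc_mult_mat[of _ n n _ n _ n, symmetric])
  finally have "similar_mat A (Q * A * P)"
    using A P Q PQ QP by (intro similar_matI[where P = P and Q = Q and n = n]) auto
  then show ?thesis unfolding P_def Q_def .
qed

definition residue_quotient_mat :: "nat \<Rightarrow> real mat \<Rightarrow> real mat" where
  "residue_quotient_mat k A =
     mat k k (\<lambda>(r,s). \<Sum>c | c < dim_row A \<and> c mod k = r. A $$ (c,s))"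

lemma fold_conjugate_four_block:
  fixes A :: "real mat" and lam :: "nat \<Rightarrow> real"
  assumes A: "A \<in> carrier_mat n n" and k: "0 < k" "k \<le> n"
    and eigvec: "\<And>a b. a < n \<Longrightarrow> k \<le> b \<Longrightarrow> b < n \<Longrightarrow> A $$ (a,b) - A $$ (a, b mod k)
       = lam b * ((if a = b then 1 else 0) - (if a = b mod k then 1 else 0))"
  defines "T \<equiv> (1\<^sub>m n + fold_mat n k) * A * (1\<^sub>m n - fold_mat n k)"
  shows "T = four_block_mat (residue_quotient_mat k A) (0\<^sub>m k (n - k))
               (mat (n - k) k (\<lambda>(i,j). T $$ (i + k, j)))
               (mat (n - k) (n - k) (\<lambda>(i,j). if i = j then lam (i + k) else 0))"
    (is "T = four_block_mat ?Q ?Z ?X ?D")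
proof (rule eq_matI)
  fix i j assume "i < dim_row (four_block_mat ?Q ?Z ?X ?D)" "j < dim_col (four_block_mat ?Q ?Z ?X ?D)"
  then have ij: "i < n" "j < n" using k by (auto simp: residue_quotient_mat_def)
  consider "i < k" "j < k" | "k \<le> i" "j < k" | "k \<le> j" by linarith
  then show "T $$ (i,j) = four_block_mat ?Q ?Z ?X ?D $$ (i,j)"
  proof cases
    case 1
    then show ?thesis unfolding T_def fold_conjugate_entry_low[OF A k 1]
      using A by (simp add: residue_quotient_mat_def)
  next
    case 2
    then show ?thesis using ij by (simp add: residue_quotient_mat_def)
  next
    case 3
    have "T $$ (i,j) = (if i = j then lam j else 0)"
      unfolding T_def by (rule fold_conjugate_entry_high[OF A k ij 3]) (rule eigvec[OF _ 3 ij(2)])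
    then show ?thesis using ij k 3 by (auto simp: residue_quotient_mat_def)
  qed
qed (use k A in \<open>auto simp: residue_quotient_mat_def T_def minus_carrier_mat\<close>)

text \<open>In the basis \<open>e_0, \<dots>, e_(k-1)\<close>, \<open>e_b - e_(b mod k)\<close> (\<open>k \<le> b < n\<close>) the matrix is block lower
  triangular, with diagonal blocks the quotient matrix and \<open>diag (lam b)\<close>.\<close>
lemma char_poly_residue_quotient:
  fixes A :: "real mat" and lam :: "nat \<Rightarrow> real"
  assumes A: "A \<in> carrier_mat n n" and k: "0 < k" "k \<le> n"
    and eigvec: "\<And>a b. a < n \<Longrightarrow> k \<le> b \<Longrightarrow> b < n \<Longrightarrow> A $$ (a,b) - A $$ (a, b mod k)
       = lam b * ((if a = b then 1 else 0) - (if a = b mod k then 1 else 0))"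
  shows "char_poly A = char_poly (residue_quotient_mat k A) * (\<Prod>b\<in>{k..<n}. [:- lam b, 1:])"
proof -
  have "char_poly A = char_poly (residue_quotient_mat k A)
      * char_poly (mat (n - k) (n - k) (\<lambda>(i,j). if i = j then lam (i + k) else 0))"
    unfolding char_poly_similar[OF similar_mat_fold_conjugate[OF A k(1)]]
    by (subst fold_conjugate_four_block[OF A k, of lam])
      (use eigvec in \<open>auto intro!: char_poly_four_block_zero_upper_right simp: residue_quotient_mat_def\<close>)
  also have "\<dots> = char_poly (residue_quotient_mat k A) * (\<Prod>i<n-k. [:- lam (i + k), 1:])"
    by (simp only: char_poly_diagonal)
  also have "(\<Prod>i<n-k. [:- lam (i + k), 1:]) = (\<Prod>b\<in>{k..<n}. [:- lam b, 1:])"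
    using prod.shift_bounds_nat_ivl[of "\<lambda>b. [:- lam b, 1:]" 0 k "n - k"] k
    by (simp add: atLeast0LessThan)
  finally show ?thesis .
qed

lemma char_poly_nonzero:
  fixes A :: "'a :: idom mat"
  assumes "A \<in> carrier_mat n n"
  shows "char_poly A \<noteq> 0"
  using degree_monic_char_poly[OF assms] by auto

lemma proots_char_poly_four_block_diag:
  fixes A :: "'a :: idom mat"
  assumes "A \<in> carrier_mat n n" "B \<in> carrier_mat m m"
  shows "proots (char_poly (four_block_mat A (0\<^sub>m n m) (0\<^sub>m m n) B))
       = proots (char_poly A) + proots (char_poly B)"
  using assms
  by (simp add: char_poly_four_block_zero_upper_right proots_mult char_poly_nonzero)

definition const_plus_diag_mat :: "nat \<Rightarrow> real \<Rightarrow> real \<Rightarrow> real mat" where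
  "const_plus_diag_mat m c d = mat m m (\<lambda>(a,b). c + (if a = b then d else 0))"

lemma const_plus_diag_mat_carrier [simp]: "const_plus_diag_mat m c d \<in> carrier_mat m m"
  by (simp add: const_plus_diag_mat_def)

lemma proots_char_poly_const_plus_diag_mat:
  assumes "0 < m"
  shows "proots (char_poly (const_plus_diag_mat m c d))
       = add_mset (c * real m + d) (replicate_mset (m - 1) d)"
proof -
  let ?A = "const_plus_diag_mat m c d"
  have "residue_quotient_mat 1 ?A = mat 1 1 (\<lambda>(i,j). if i = j then c * real m + d else 0)"
  proof (rule eq_matI)
    have "(\<Sum>x | x < m \<and> x mod 1 = 0. ?A $$ (x,0)) = (\<Sum>x<m. c + (if x = 0 then d else 0))"
      by (rule sum.cong) (auto simp: assms const_plus_diag_mat_def)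
    also have "\<dots> = c * real m + d" using assms by (simp add: sum.distrib)
    finally show "residue_quotient_mat 1 ?A $$ (i,j)
      = mat 1 1 (\<lambda>(i,j). if i = j then c * real m + d else 0) $$ (i,j)"
      if "i < dim_row (mat 1 1 (\<lambda>(i,j). if i = j then c * real m + d else 0))"
        "j < dim_col (mat 1 1 (\<lambda>(i,j). if i = j then c * real m + d else 0))" for i j
      using that by (simp add: residue_quotient_mat_def const_plus_diag_mat_def)
  qed (simp_all add: residue_quotient_mat_def)
  then have "char_poly ?A = [:- (c * real m + d), 1:] * [:- d, 1:] ^ (m - 1)"
    using char_poly_residue_quotient[of ?A m 1 "\<lambda>_. d"] assms
      char_poly_diagonal[of 1 "\<lambda>_. c * real m + d"]
    by (simp add: const_plus_diag_mat_def del: pCons_0_0)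
  then show ?thesis
    by (simp only:) (subst proots_mult; simp add: proots_power del: pCons_0_0)
qed

lemma card_residue_class:
  assumes "r < p"
  shows "card {c. c < p * m \<and> c mod p = r} = m"
proof -
  have "{c. c < p * m \<and> c mod p = r} = (\<lambda>i. r + p * i) ` {..<m}"
  proof (intro equalityI subsetI)
    fix c assume c: "c \<in> {c. c < p * m \<and> c mod p = r}"
    then have "c = r + p * (c div p)" using mod_mult_div_eq[of c p] by auto
    moreover have "c div p < m" using c by (simp add: less_mult_imp_div_less mult.commute)
    ultimately show "c \<in> (\<lambda>i. r + p * i) ` {..<m}" by blast
  next
    fix c assume "c \<in> (\<lambda>i. r + p * i) ` {..<m}"
    then obtain i where i: "i < m" "c = r + p * i" by auto
    have "r + p * i < p * Suc i" using assms by simp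
    also have "\<dots> \<le> p * m" using i by (intro mult_le_mono2) auto
    finally show "c \<in> {c. c < p * m \<and> c mod p = r}" using i assms by simp
  qed
  moreover have "inj_on (\<lambda>i. r + p * i) {..<m}" using assms by (intro inj_onI) auto
  ultimately show ?thesis by (simp add: card_image)
qed

definition complete_multipartite_mat :: "nat \<Rightarrow> nat \<Rightarrow> real mat" where
  "complete_multipartite_mat p m = mat (p*m) (p*m) (\<lambda>(a,b). if a mod p = b mod p then 0 else 1)"

lemma complete_multipartite_mat_carrier [simp]:
  "complete_multipartite_mat p m \<in> carrier_mat (p*m) (p*m)"
  by (simp add: complete_multipartite_mat_def)

lemma proots_char_poly_complete_multipartite_mat:
  assumes p: "0 < p" and m: "0 < m"
  shows "proots (char_poly (complete_multipartite_mat p m))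
       = add_mset (real m * real (p - 1)) (replicate_mset (p - 1) (- real m))
         + replicate_mset (p * m - p) 0"
proof -
  let ?A = "complete_multipartite_mat p m"
  have pm: "p \<le> p * m" using m by simp
  have "residue_quotient_mat p ?A = const_plus_diag_mat p (real m) (- real m)"
  proof (rule eq_matI)
    fix r s assume "r < dim_row (const_plus_diag_mat p (real m) (- real m))"
      "s < dim_col (const_plus_diag_mat p (real m) (- real m))"
    then have rs: "r < p" "s < p" by (auto simp: const_plus_diag_mat_def)
    have "(\<Sum>x | x < p*m \<and> x mod p = r. ?A $$ (x,s)) = (\<Sum>x | x < p*m \<and> x mod p = r. if r = s then 0 else 1)"
      using order_less_le_trans[OF rs(2) pm] rs by (intro sum.cong) (auto simp: complete_multipartite_mat_def)
    also have "\<dots> = (if r = s then 0 else real m)" using card_residue_class[OF rs(1), of m] by simp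
    finally show "residue_quotient_mat p ?A $$ (r, s) = const_plus_diag_mat p (real m) (- real m) $$ (r, s)"
      using rs by (simp add: residue_quotient_mat_def const_plus_diag_mat_def complete_multipartite_mat_def)
  qed (auto simp: residue_quotient_mat_def const_plus_diag_mat_def)
  moreover have "char_poly ?A = char_poly (residue_quotient_mat p ?A) * (\<Prod>b\<in>{p..<p*m}. [:- 0, 1:])"
  proof (rule char_poly_residue_quotient[where lam = "\<lambda>_. 0"])
    show "?A $$ (a,b) - ?A $$ (a, b mod p)
        = 0 * ((if a = b then 1 else 0) - (if a = b mod p then 1 else 0))"
      if "a < p * m" "b < p * m" for a b
      using that p pm order_less_le_trans[OF mod_less_divisor[OF p] pm]
      by (simp add: complete_multipartite_mat_def)
  qed (use p pm in auto)
  ultimately show ?thesis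
    using proots_char_poly_const_plus_diag_mat[OF p, of "real m" "- real m"] p
    by (simp add: proots_mult proots_power char_poly_nonzero[OF const_plus_diag_mat_carrier]
        of_nat_diff algebra_simps del: pCons_0_0)
qed

lemma eig_eq_nth_sorted_roots:
  assumes "proots (char_poly A) = mset xs" "sorted xs" "0 < k" "k \<le> length xs"
  shows "eig A k = xs ! (length xs - k)"
  using assms by (simp add: eig_def eigs_desc_def sorted_sort_id rev_nth Suc_diff_Suc)

lemma KK_loop_blocks:
  "KK_loop j = four_block_mat (const_plus_diag_mat (j+2) 1 (-1)) (0\<^sub>m (j+2) (j+1))
                 (0\<^sub>m (j+1) (j+2)) (const_plus_diag_mat (j+1) 1 0)"
  by (rule eq_matI) (auto simp: KK_loop_def const_plus_diag_mat_def)

lemma proots_char_poly_KK_loop: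
  "proots (char_poly (KK_loop j))
     = mset (replicate (j+1) (-1) @ replicate j 0 @ [real j + 1, real j + 1])"
  unfolding KK_loop_blocks
  by (simp add: proots_char_poly_four_block_diag proots_char_poly_const_plus_diag_mat algebra_simps)

lemma KK_loop_eig_gap: "eig (KK_loop j) 2 - eig (KK_loop j) ((2*j+3) - j) = real j + 2"
proof -
  let ?xs = "replicate (j+1) (-1) @ replicate j 0 @ [real j + 1, real j + 1]"
  have sorted: "sorted ?xs" by (auto simp: sorted_append)
  have "eig (KK_loop j) 2 = real j + 1"
    using eig_eq_nth_sorted_roots[OF proots_char_poly_KK_loop sorted, of 2]
    by (simp add: nth_append)
  moreover have "eig (KK_loop j) ((2*j+3) - j) = -1"
    using eig_eq_nth_sorted_roots[OF proots_char_poly_KK_loop sorted, of "(2*j+3) - j"]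
    by (simp add: nth_append nth_Cons')
  ultimately show ?thesis by simp
qed

text \<open>The \<open>m\<close>-fold blow-up of \<open>KK_loop j\<close> with its loops removed: an unlooped vertex
  becomes an independent set of size \<open>m\<close>, a looped one a clique of size \<open>m\<close>.\<close>
definition blowup_mat :: "nat \<Rightarrow> nat \<Rightarrow> real mat" where
  "blowup_mat j m = four_block_mat (complete_multipartite_mat (j+2) m) (0\<^sub>m ((j+2)*m) ((j+1)*m))
     (0\<^sub>m ((j+1)*m) ((j+2)*m)) (const_plus_diag_mat ((j+1)*m) 1 (-1))"

lemma simple_adj_blowup_mat: "simple_adj ((2*j+3) * m) (blowup_mat j m)"
  unfolding simple_adj_def blowup_mat_def complete_multipartite_mat_def const_plus_diag_mat_def
  by (auto simp: algebra_simps)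

lemma proots_char_poly_blowup_mat:
  assumes "0 < m"
  shows "proots (char_poly (blowup_mat j m))
     = mset (replicate (j+1) (- real m) @ replicate ((j+1)*m - 1) (-1)
         @ replicate ((j+2)*m - (j+2)) 0 @ [real ((j+1)*m) - 1, real ((j+1)*m)])"
  using assms unfolding blowup_mat_def
    proots_char_poly_four_block_diag[OF complete_multipartite_mat_carrier const_plus_diag_mat_carrier]
  by (simp add: proots_char_poly_complete_multipartite_mat proots_char_poly_const_plus_diag_mat
      of_nat_diff algebra_simps)

lemma nth_length_minus_two: "(ys @ [u, v]) ! (length (ys @ [u, v]) - 2) = u"
  by (simp add: nth_append)

lemma spread_g_blowup_mat:
  assumes m: "0 < m"
  shows "spread_g 1 j (blowup_mat j m) = real (j+2) * real m - 1"
proof -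
  let ?xs = "replicate (j+1) (- real m) @ replicate ((j+1)*m - 1) (-1)
         @ replicate ((j+2)*m - (j+2)) 0 @ [real ((j+1)*m) - 1, real ((j+1)*m)]"
  have len: "length ?xs = (2*j+3) * m" using m by (cases m) (auto simp: algebra_simps)
  have "1 \<le> (j+1)*m" using m by simp
  then have "1 \<le> real ((j+1)*m)" by (metis of_nat_1 of_nat_le_iff)
  then have sorted: "sorted ?xs" using m by (auto simp: sorted_append)
  have roots: "proots (char_poly (blowup_mat j m)) = mset ?xs"
    by (rule proots_char_poly_blowup_mat[OF m])
  have "eig (blowup_mat j m) 2 = ?xs ! (length ?xs - 2)"
    by (rule eig_eq_nth_sorted_roots[OF roots sorted]) (use len m in simp_all)
  also have "\<dots> = real ((j+1)*m) - 1"
    by (simp only: append_assoc[symmetric] nth_length_minus_two)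
  finally have second: "eig (blowup_mat j m) 2 = real ((j+1)*m) - 1" .
  have "j \<le> (2*j+3) * m" using m by (cases m) auto
  then have idx: "length ?xs - ((2*j+3) * m - j) = j" unfolding len by simp
  have "eig (blowup_mat j m) ((2*j+3) * m - j) = ?xs ! (length ?xs - ((2*j+3) * m - j))"
    by (rule eig_eq_nth_sorted_roots[OF roots sorted]) (use len m in simp_all)
  also have "\<dots> = - real m"
    unfolding idx by (simp add: nth_append nth_Cons')
  finally have lowest: "eig (blowup_mat j m) ((2*j+3) * m - j) = - real m" .
  have "dim_row (blowup_mat j m) = (2*j+3) * m"
    by (simp add: blowup_mat_def complete_multipartite_mat_def const_plus_diag_mat_def algebra_simps)
  then show ?thesis
    unfolding spread_g_def one_add_one using second lowest by (simp add: algebra_simps)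
qed

lemma finite_simple_adj: "finite {A. simple_adj n A}"
proof -
  let ?S = "{f :: nat \<times> nat \<Rightarrow> real. \<forall>x. (x \<in> {0..<n} \<times> {0..<n} \<longrightarrow> f x \<in> {0,1})
                                   \<and> (x \<notin> {0..<n} \<times> {0..<n} \<longrightarrow> f x = 0)}"
  have "finite ?S" by (rule finite_set_of_finite_funs) auto
  moreover have "{A. simple_adj n A} \<subseteq> mat n n ` ?S"
  proof
    fix A assume "A \<in> {A. simple_adj n A}"
    then have A: "simple_adj n A" by simp
    let ?f = "\<lambda>x. if x \<in> {0..<n} \<times> {0..<n} then A $$ x else 0"
    have "A = mat n n ?f" using A unfolding simple_adj_def by (auto intro!: eq_matI)
    moreover have "?f \<in> ?S" using A unfolding simple_adj_def by auto
    ultimately show "A \<in> mat n n ` ?S" by blast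
  qed
  ultimately show ?thesis by (rule finite_surj)
qed

lemma spread_g_le_spread_n:
  assumes "simple_adj n A"
  shows "spread_g i j A \<le> spread_n i j n"
proof -
  have "finite {spread_g i j A | A. simple_adj n A}"
    using finite_image_set[OF finite_simple_adj[of n], of "spread_g i j"] by simp
  then show ?thesis
    unfolding spread_n_def using assms by (intro Max_ge) auto
qed

lemma lim_ge_of_linear_lower_bound:
  fixes f :: "nat \<Rightarrow> real"
  assumes conv: "convergent (\<lambda>n. f n / real n)" and c: "0 < c"
    and bound: "\<And>m. 0 < m \<Longrightarrow> a * real m - b \<le> f (c * m)"
  shows "a / real c \<le> lim (\<lambda>n. f n / real n)"
proof -
  let ?g = "\<lambda>n. f n / real n"
  have "?g \<longlonglongrightarrow> lim ?g" using conv by (simp add: convergent_LIMSEQ_iff)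
  moreover have "strict_mono (\<lambda>m. c * Suc m)" using c by (simp add: strict_mono_Suc_iff)
  ultimately have sub: "(\<lambda>m. ?g (c * Suc m)) \<longlonglongrightarrow> lim ?g"
    using LIMSEQ_subseq_LIMSEQ unfolding comp_def by blast
  have "(\<lambda>m. a / real c - b / real c * inverse (real (Suc m))) \<longlonglongrightarrow> a / real c - b / real c * 0"
    by (intro tendsto_intros LIMSEQ_inverse_real_of_nat)
  moreover have "a / real c - b / real c * inverse (real (Suc m)) \<le> ?g (c * Suc m)" for m
  proof -
    have combine: "a / C - b / C * inverse S = (a * S - b) / (C * S)" if "C \<noteq> 0" "S \<noteq> 0"
      for C S :: real
      using that by (simp add: field_simps)
    have "a / real c - b / real c * inverse (real (Suc m)) = (a * real (Suc m) - b) / (real c * real (Suc m))"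
      by (rule combine) (use c in simp_all)
    also have "\<dots> = (a * real (Suc m) - b) / real (c * Suc m)"
      by (simp only: of_nat_mult)
    also have "\<dots> \<le> ?g (c * Suc m)"
      by (rule divide_right_mono[OF bound]) simp_all
    finally show ?thesis .
  qed
  ultimately show ?thesis using LIMSEQ_le[OF _ sub] by auto
qed

theorem mainTheorem9:
  fixes j :: nat
  assumes "convergent (\<lambda>n. spread_n 1 j n / real n)"
  shows "eig (KK_loop j) 2 - eig (KK_loop j) ((2*j+3) - j) = real j + 2
         \<and> s_lim 1 j \<ge> (real j + 2) / (2 * real j + 3)"
proof
  show "eig (KK_loop j) 2 - eig (KK_loop j) ((2*j+3) - j) = real j + 2"
    by (rule KK_loop_eig_gap)
  have "(real j + 2) * real m - 1 \<le> spread_n 1 j ((2*j+3) * m)" if "0 < m" for m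
    using spread_g_le_spread_n[OF simple_adj_blowup_mat, of 1 j j m] spread_g_blowup_mat[OF that, of j]
    by (simp add: algebra_simps)
  from lim_ge_of_linear_lower_bound[OF assms _ this]
  show "s_lim 1 j \<ge> (real j + 2) / (2 * real j + 3)"
    unfolding s_lim_def by simp
qed

end
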